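(* Let $P_n$ be a random school choice problem of size $n$ and let $NE_n$ be the set of students $j$ that no student envies under $\mathrm{DA}(P_n)$ (i.e. $j$ has in-degree $0$ in $G^{\mathrm{DA}(P_n)}$). Then $\mathbb E[|NE_n|]=H_n:=\sum_{k=1}^n \frac1k$.
   Context: A random school choice problem $P_n$ of size $n$ has a set $I$ of $n$ students and a set $S$ of $n$ schools, each school with quota 1; each student's strict preference over $S$ is uniform among all $n!$ linear orders, each school's strict priority over $I$ is uniform among all $n!$ linear orders, and all of these are mutually independent. $\mathrm{DA}(P_n)$ is the matching produced by student-proposing deferred acceptance (each unheld student applies to her most preferred school not yet rejecting her; each school tentatively holds its highest-priority applicant and rejects the others; stop when no new rejection occurs); here every student is matched. Student $i$ envies student $j$ if $i$ strictly prefers $\mathrm{DA}_j(P_n)$ to $\mathrm{DA}_i(P_n)$; the envy digraph $G^{\mathrm{DA}(P_n)}$ has vertex set $I$ and an edge $(i,j)$ iff $i$ envies $j$. *)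

theory Defs
  imports "HOL-Probability.Probability" "HOL-Combinatorics.Multiset_Permutations"
begin

text \<open>Students and schools are both {0..<n}. A preference of student i is a list
  of all schools, most preferred first; a priority of school s is a list of all
  students, highest priority first.\<close>

definition ranks_above :: "'a list \<Rightarrow> 'a \<Rightarrow> 'a \<Rightarrow> bool" where
  "ranks_above xs a b \<longleftrightarrow> (\<exists>k l. k < l \<and> l < length xs \<and> xs ! k = a \<and> xs ! l = b)"

type_synonym profile = "(nat \<Rightarrow> nat list) \<times> (nat \<Rightarrow> nat list)"

definition profiles :: "nat \<Rightarrow> profile set" where
  "profiles n = (\<Pi>\<^sub>E i\<in>{0..<n}. permutations_of_set {0..<n})
              \<times> (\<Pi>\<^sub>E s\<in>{0..<n}. permutations_of_set {0..<n})"

text \<open>The state r i is the number of schools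
  that have rejected student i so far; every student applies to pref i ! r i
  (held students re-apply to the school holding them).\<close>

definition da_step :: "nat \<Rightarrow> profile \<Rightarrow> (nat \<Rightarrow> nat) \<Rightarrow> (nat \<Rightarrow> nat)" where
  "da_step n P r = (\<lambda>i. if (\<exists>j<n. j \<noteq> i \<and> fst P j ! r j = fst P i ! r i
                              \<and> ranks_above (snd P (fst P i ! r i)) j i)
                        then Suc (r i) else r i)"

text \<open>The algorithm stops after at most n*(n-1) rounds with a rejection; after
  that the step is the identity, so iterating n*n times yields the final state.\<close>

definition da_final :: "nat \<Rightarrow> profile \<Rightarrow> (nat \<Rightarrow> nat)" where
  "da_final n P = (da_step n P ^^ (n * n)) (\<lambda>_. 0)"

definition DA :: "nat \<Rightarrow> profile \<Rightarrow> nat \<Rightarrow> nat" where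
  "DA n P i = fst P i ! da_final n P i"

definition envies :: "nat \<Rightarrow> profile \<Rightarrow> nat \<Rightarrow> nat \<Rightarrow> bool" where
  "envies n P i j \<longleftrightarrow> ranks_above (fst P i) (DA n P j) (DA n P i)"

definition not_envied :: "nat \<Rightarrow> profile \<Rightarrow> nat set" where
  "not_envied n P = {j\<in>{0..<n}. \<not> (\<exists>i\<in>{0..<n}. envies n P i j)}"

end

theory Submission
  imports Defs "HOL-Analysis.Harmonic_Numbers"
begin

(* Fix the priorities and let DA read the preferences lazily: its state is the history h of the
   proposals made so far, and given h the preference profile is uniform among the completions of h.
   For a school s let e be the number of schools nobody has proposed to, and let the potential of s
   be H_e / e if nobody has proposed to s, 1 / (e + 1) if exactly one student has, and 0 otherwise.
   Averaging over the next choices revealed by the students rejected in a round leaves the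
   potential unchanged, so its expectation stays H_n / n, its initial value. When DA stops every
   school is held, so e = 0 and the potential of s is 1 iff s received a single proposal. A student
   is envied iff somebody proposed to her school before moving on, i.e. iff her school received more
   than one proposal; hence the number of unenvied students is the final total potential, whose
   expectation is n * H_n / n = H_n. *)

lemma ranks_above_nth_iff:
  assumes "distinct xs" "r < length xs"
  shows "ranks_above xs a (xs ! r) \<longleftrightarrow> a \<in> set (take r xs)"
proof
  assume "ranks_above xs a (xs ! r)"
  then obtain k l where kl: "k < l" "l < length xs" "xs ! k = a" "xs ! l = xs ! r"
    unfolding ranks_above_def by blast
  then have "l = r" using assms nth_eq_iff_index_eq by blast
  then show "a \<in> set (take r xs)" using kl by (auto simp: in_set_conv_nth)
next
  assume "a \<in> set (take r xs)"
  then obtain k where "k < r" "xs ! k = a" using assms by (auto simp: in_set_conv_nth)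
  then show "ranks_above xs a (xs ! r)" unfolding ranks_above_def using assms by blast
qed

lemma ranks_above_total:
  assumes "a \<in> set xs" "b \<in> set xs" "a \<noteq> b"
  shows "ranks_above xs a b \<or> ranks_above xs b a"
proof -
  obtain k where k: "k < length xs" "xs ! k = a" using assms by (auto simp: in_set_conv_nth)
  obtain l where l: "l < length xs" "xs ! l = b" using assms by (auto simp: in_set_conv_nth)
  have "k \<noteq> l" using k l assms by auto
  then show ?thesis unfolding ranks_above_def using k l by (metis linorder_neqE_nat)
qed

lemma ranks_above_exists_top:
  assumes "distinct xs" "J \<subseteq> set xs" "J \<noteq> {}"
  shows "\<exists>j\<in>J. \<forall>j'\<in>J. \<not> ranks_above xs j' j"
proof -
  define K where "K = {k. k < length xs \<and> xs ! k \<in> J}"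
  have "K \<noteq> {}" using assms by (force simp: K_def in_set_conv_nth)
  moreover have "finite K" by (simp add: K_def)
  ultimately have k0: "Min K \<in> K" by simp
  have "\<not> ranks_above xs j' (xs ! Min K)" if "j' \<in> J" for j'
  proof
    assume "ranks_above xs j' (xs ! Min K)"
    then obtain k l where kl: "k < l" "l < length xs" "xs ! k = j'" "xs ! l = xs ! Min K"
      unfolding ranks_above_def by blast
    have "l = Min K" using kl k0 assms(1) nth_eq_iff_index_eq by (auto simp: K_def)
    moreover have "k \<in> K" using kl that by (auto simp: K_def)
    ultimately show False using kl \<open>finite K\<close> Min_le by (metis leD)
  qed
  moreover have "xs ! Min K \<in> J" using k0 by (simp add: K_def)
  ultimately show ?thesis by blast
qed

lemma card_permutations_with_prefix:
  assumes "distinct p" "set p \<subseteq> S" "finite S"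
  shows "card {l \<in> permutations_of_set S. take (length p) l = p} = fact (card S - length p)"
proof -
  have "(@) p ` permutations_of_set (S - set p) = {l \<in> permutations_of_set S. take (length p) l = p}"
  proof (intro equalityI subsetI)
    fix l assume l: "l \<in> {l \<in> permutations_of_set S. take (length p) l = p}"
    then have eq: "l = p @ drop (length p) l" by (metis (mono_tags) append_take_drop_id mem_Collect_eq)
    have "distinct l" "set l = S" using l by (auto simp: permutations_of_set_def)
    then have "distinct (p @ drop (length p) l)" "set (p @ drop (length p) l) = S"
      using eq by simp_all
    then have "drop (length p) l \<in> permutations_of_set (S - set p)"
      by (auto simp: permutations_of_set_def)
    then show "l \<in> (@) p ` permutations_of_set (S - set p)" using eq by blast
  qed (use assms in \<open>auto simp: permutations_of_set_def\<close>)
  moreover have "inj_on ((@) p) (permutations_of_set (S - set p))" by (simp add: inj_on_def)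
  ultimately have "card {l \<in> permutations_of_set S. take (length p) l = p} = fact (card (S - set p))"
    using assms by (metis card_image card_permutations_of_set finite_Diff)
  also have "card (S - set p) = card S - length p"
    using assms by (simp add: card_Diff_subset distinct_card)
  finally show ?thesis .
qed

lemma sum_piecewise_constant:
  fixes f :: "'b \<Rightarrow> 'a :: comm_semiring_1"
  assumes "finite D" "E \<subseteq> D" "s \<in> D"
    and "\<And>x. x \<in> E - {s} \<Longrightarrow> f x = b" "\<And>x. x \<in> D - E - {s} \<Longrightarrow> f x = c"
  shows "(\<Sum>x\<in>D. f x) = f s + of_nat (card (E - {s})) * b + of_nat (card (D - E - {s})) * c"
proof -
  have "(\<Sum>x\<in>D. f x) = f s + (\<Sum>x\<in>D - {s}. f x)" using assms by (simp add: sum.remove)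
  also have "D - {s} = (E - {s}) \<union> (D - E - {s})" using assms by auto
  also have "sum f \<dots> = (\<Sum>x\<in>E - {s}. f x) + (\<Sum>x\<in>D - E - {s}. f x)"
    using assms finite_subset by (intro sum.union_disjoint) auto
  finally show ?thesis using assms(4,5) by (simp add: add.assoc)
qed

section \<open>Uniformly random completions of partial profiles\<close>

definition partial_profile :: "nat \<Rightarrow> (nat \<Rightarrow> nat list) \<Rightarrow> bool" where
  "partial_profile n h \<longleftrightarrow> (\<forall>i<n. distinct (h i) \<and> set (h i) \<subseteq> {0..<n})"

definition completions :: "nat \<Rightarrow> (nat \<Rightarrow> nat list) \<Rightarrow> (nat \<Rightarrow> nat list) set" where
  "completions n h =
     (\<Pi>\<^sub>E i\<in>{0..<n}. {l \<in> permutations_of_set {0..<n}. take (length (h i)) l = h i})"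

lemma completions_Nil: "completions n (\<lambda>_. []) = (\<Pi>\<^sub>E i\<in>{0..<n}. permutations_of_set {0..<n})"
  by (simp add: completions_def)

lemma finite_completions: "finite (completions n h)"
  unfolding completions_def by (intro finite_PiE) auto

lemma mem_completions_iff:
  "prefs \<in> completions n h \<longleftrightarrow> prefs \<in> extensional {0..<n} \<and>
     (\<forall>i<n. prefs i \<in> permutations_of_set {0..<n} \<and> take (length (h i)) (prefs i) = h i)"
  unfolding completions_def PiE_def Pi_def by auto

lemma completionsD:
  assumes "prefs \<in> completions n h" "i < n"
  shows "take (length (h i)) (prefs i) = h i" "length (prefs i) = n"
    "distinct (prefs i)" "set (prefs i) = {0..<n}"
  using assms by (auto simp: mem_completions_iff length_finite_permutations_of_set
      permutations_of_setD)

lemma card_completions: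
  assumes "partial_profile n h"
  shows "card (completions n h) = (\<Prod>i\<in>{0..<n}. fact (n - length (h i)))"
  unfolding completions_def using assms
  by (subst card_PiE) (auto simp: partial_profile_def card_permutations_with_prefix intro!: prod.cong)

lemma completions_snoc_subset:
  assumes "i < n"
  shows "completions n (h(i := h i @ [x])) \<subseteq> completions n h"
proof
  fix prefs assume "prefs \<in> completions n (h(i := h i @ [x]))"
  moreover from this have "take (Suc (length (h i))) (prefs i) = h i @ [x]"
    using assms completionsD(1)[of prefs n "h(i := h i @ [x])" i] by simp
  then have "take (length (h i)) (take (Suc (length (h i))) (prefs i)) = h i" by simp
  then have "take (length (h i)) (prefs i) = h i" by simp
  ultimately show "prefs \<in> completions n h" using assms by (auto simp: mem_completions_iff split: if_splits)
qed

lemma completions_eq_UN_snoc: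
  assumes "partial_profile n h" "i < n" "length (h i) < n"
  shows "completions n h = (\<Union>x\<in>{0..<n} - set (h i). completions n (h(i := h i @ [x])))"
proof (intro equalityI subsetI)
  fix prefs assume prefs: "prefs \<in> completions n h"
  define x where "x = prefs i ! length (h i)"
  have take_Suc: "take (Suc (length (h i))) (prefs i) = h i @ [x]"
    using completionsD[OF prefs assms(2)] assms(3) by (simp add: x_def take_Suc_conv_app_nth)
  moreover have "distinct (take (Suc (length (h i))) (prefs i))"
    "set (take (Suc (length (h i))) (prefs i)) \<subseteq> {0..<n}"
    using completionsD[OF prefs assms(2)] by (auto dest: in_set_takeD)
  ultimately have "x \<in> {0..<n} - set (h i)" by simp
  moreover have "prefs \<in> completions n (h(i := h i @ [x]))"
    using prefs take_Suc by (auto simp: mem_completions_iff)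
  ultimately show "prefs \<in> (\<Union>x\<in>{0..<n} - set (h i). completions n (h(i := h i @ [x])))" by blast
qed (use completions_snoc_subset[OF assms(2)] in blast)

lemma sum_completions_split:
  assumes "partial_profile n h" "i < n" "length (h i) < n"
  shows "sum F (completions n h)
           = (\<Sum>x\<in>{0..<n} - set (h i). sum F (completions n (h(i := h i @ [x]))))"
proof -
  have "completions n (h(i := h i @ [x])) \<inter> completions n (h(i := h i @ [y])) = {}"
    if "x \<noteq> y" for x y
  proof -
    have "take (Suc (length (h i))) (prefs i) = h i @ [z]"
      if "prefs \<in> completions n (h(i := h i @ [z]))" for prefs z
      using completionsD(1)[OF that assms(2)] by simp
    then show ?thesis using \<open>x \<noteq> y\<close> by (metis disjoint_iff same_append_eq list.inject)
  qed
  then show ?thesis unfolding completions_eq_UN_snoc[OF assms]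
    by (intro sum.UNION_disjoint) (auto simp: finite_completions)
qed

lemma card_completions_snoc:
  assumes "partial_profile n h" "i < n" "x < n" "x \<notin> set (h i)"
  shows "card (completions n h) = (n - length (h i)) * card (completions n (h(i := h i @ [x])))"
proof -
  have "partial_profile n (h(i := h i @ [x]))" using assms by (auto simp: partial_profile_def)
  moreover have "Suc (length (h i)) \<le> n"
  proof -
    have "card (insert x (set (h i))) \<le> card {0..<n}"
      using assms by (intro card_mono) (auto simp: partial_profile_def)
    then show ?thesis using assms by (simp add: partial_profile_def distinct_card)
  qed
  then have "n - length (h i) = Suc (n - Suc (length (h i)))" by simp
  then have "fact (n - length (h i)) = (n - length (h i)) * (fact (n - Suc (length (h i))) :: nat)"
    by (simp only: fact_Suc of_nat_id)
  ultimately show ?thesis using assms(1,2)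
    by (simp add: card_completions prod.remove[of "{0..<n}" i] mult.assoc)
qed

definition reveal :: "nat set \<Rightarrow> (nat \<Rightarrow> nat list) \<Rightarrow> (nat \<Rightarrow> nat list) \<Rightarrow> nat \<Rightarrow> nat list" where
  "reveal R h prefs i = (if i \<in> R then take (Suc (length (h i))) (prefs i) else h i)"

lemma reveal_empty [simp]: "reveal {} h prefs = h"
  by (simp add: reveal_def fun_eq_iff)

lemma reveal_insert:
  assumes "i \<notin> R" "i < n" "prefs \<in> completions n (h(i := h i @ [x]))"
  shows "reveal R (h(i := h i @ [x])) prefs = reveal (insert i R) h prefs"
proof -
  have "take (Suc (length (h i))) (prefs i) = h i @ [x]"
    using completionsD(1)[OF assms(3,2)] by simp
  then show ?thesis using assms(1) by (auto simp: reveal_def fun_eq_iff)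
qed

lemma completions_reveal_self:
  assumes "prefs \<in> completions n h"
  shows "prefs \<in> completions n (reveal R h prefs)"
  using assms by (auto simp: mem_completions_iff reveal_def min_def)

lemma reveal_eq_if_completions_reveal:
  assumes "\<forall>i\<in>R. i < n \<and> length (h i) < n" "prefs \<in> completions n h"
    and "y \<in> completions n (reveal R h prefs)"
  shows "reveal R h y = reveal R h prefs"
proof
  fix i show "reveal R h y i = reveal R h prefs i"
  proof (cases "i \<in> R")
    case True
    then have i: "i < n" "length (h i) < n" using assms(1) by auto
    then have "length (reveal R h prefs i) = Suc (length (h i))"
      using True completionsD(2)[OF assms(2)] by (simp add: reveal_def)
    then show ?thesis using completionsD(1)[OF assms(3) i(1)] True by (simp add: reveal_def)
  qed (simp add: reveal_def)
qed

text \<open>The tower property of conditional expectation, for uniformly random completions.\<close>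

lemma sum_completions_tower:
  fixes G H :: "(nat \<Rightarrow> nat list) \<Rightarrow> 'a :: comm_semiring_1"
  assumes "partial_profile n h" "R \<subseteq> {0..<n}" "\<forall>i\<in>R. length (h i) < n"
    and "\<And>prefs. prefs \<in> completions n h \<Longrightarrow>
      sum G (completions n (reveal R h prefs))
        = of_nat (card (completions n (reveal R h prefs))) * H (reveal R h prefs)"
  shows "sum G (completions n h) = (\<Sum>prefs\<in>completions n h. H (reveal R h prefs))"
proof -
  have "finite R" using assms(2) finite_subset by blast
  then show ?thesis using assms
  proof (induction R arbitrary: h rule: finite_induct)
    case empty
    then show ?case by (cases "completions n h = {}") auto
  next
    case (insert i R)
    have i: "i < n" "length (h i) < n" using insert.prems by auto
    have "sum G (completions n h)
        = (\<Sum>x\<in>{0..<n} - set (h i). sum G (completions n (h(i := h i @ [x]))))"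
      using sum_completions_split[OF insert.prems(1) i] .
    also have "\<dots> = (\<Sum>x\<in>{0..<n} - set (h i).
        \<Sum>prefs\<in>completions n (h(i := h i @ [x])). H (reveal (insert i R) h prefs))"
    proof (rule sum.cong[OF refl])
      fix x assume x: "x \<in> {0..<n} - set (h i)"
      let ?h = "h(i := h i @ [x])"
      have reveal_eq: "reveal R ?h prefs = reveal (insert i R) h prefs"
        if "prefs \<in> completions n ?h" for prefs
        using reveal_insert[OF insert.hyps(2) i(1) that] .
      have "sum G (completions n ?h) = (\<Sum>prefs\<in>completions n ?h. H (reveal R ?h prefs))"
      proof (rule insert.IH)
        show "partial_profile n ?h" using insert.prems(1) x by (auto simp: partial_profile_def)
        show "R \<subseteq> {0..<n}" "\<forall>j\<in>R. length (?h j) < n" using insert by auto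
        show "sum G (completions n (reveal R ?h prefs))
            = of_nat (card (completions n (reveal R ?h prefs))) * H (reveal R ?h prefs)"
          if "prefs \<in> completions n ?h" for prefs
          using insert.prems(4) reveal_eq[OF that] completions_snoc_subset[OF i(1)] that by auto
      qed
      then show "sum G (completions n ?h)
          = (\<Sum>prefs\<in>completions n ?h. H (reveal (insert i R) h prefs))"
        using reveal_eq by simp
    qed
    also have "\<dots> = (\<Sum>prefs\<in>completions n h. H (reveal (insert i R) h prefs))"
      using sum_completions_split[OF insert.prems(1) i, symmetric] .
    finally show ?case .
  qed
qed

section \<open>The potential\<close>

definition unproposed :: "nat \<Rightarrow> (nat \<Rightarrow> nat list) \<Rightarrow> nat set" where
  "unproposed n h = {x\<in>{0..<n}. \<forall>j<n. x \<notin> set (h j)}"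

definition proposers :: "nat \<Rightarrow> (nat \<Rightarrow> nat list) \<Rightarrow> nat \<Rightarrow> nat set" where
  "proposers n h s = {j\<in>{0..<n}. s \<in> set (h j)}"

text \<open>The conditional probability, given the proposals recorded in h, that school s ends up
  proposed to by exactly one student.\<close>

definition potential :: "nat \<Rightarrow> (nat \<Rightarrow> nat list) \<Rightarrow> nat \<Rightarrow> real" where
  "potential n h s =
    (let e = card (unproposed n h) in
     if proposers n h s = {} then harm e / e
     else if card (proposers n h s) = 1 then 1 / (e + 1) else 0)"

lemma finite_proposers [simp]: "finite (proposers n h s)"
  by (simp add: proposers_def)

lemma finite_unproposed [simp]: "finite (unproposed n h)"
  by (simp add: unproposed_def)

lemma unproposed_snoc: "i < n \<Longrightarrow> unproposed n (h(i := h i @ [x])) = unproposed n h - {x}"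
  by (auto simp: unproposed_def)

lemma proposers_snoc:
  "i < n \<Longrightarrow> proposers n (h(i := h i @ [x])) s
     = (if x = s then insert i (proposers n h s) else proposers n h s)"
  by (auto simp: proposers_def)

lemma card_proposers_snoc_ge:
  "i < n \<Longrightarrow> card (proposers n h s) \<le> card (proposers n (h(i := h i @ [x])) s)"
  by (simp add: proposers_snoc card_insert_le)

lemma proposers_eq_empty_iff: "s < n \<Longrightarrow> proposers n h s = {} \<longleftrightarrow> s \<in> unproposed n h"
  by (auto simp: proposers_def unproposed_def)

lemma card_remaining_schools:
  "partial_profile n h \<Longrightarrow> i < n \<Longrightarrow> card ({0..<n} - set (h i)) = n - length (h i)"
  by (simp add: partial_profile_def card_Diff_subset distinct_card)

lemma potential_eq_0: "2 \<le> card (proposers n h s) \<Longrightarrow> potential n h s = 0"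
  by (cases "proposers n h s = {}") (auto simp: potential_def Let_def)

lemma sum_potential_snoc_single:
  assumes h: "partial_profile n h" and i: "i < n" and s: "card (proposers n h s) = 1" "s < n"
    and "s \<notin> set (h i)" "unproposed n h \<noteq> {}"
  shows "(\<Sum>x\<in>{0..<n} - set (h i). potential n (h(i := h i @ [x])) s)
           = real (n - length (h i)) * potential n h s"
proof -
  define D E where "D = {0..<n} - set (h i)" and "E = unproposed n h"
  define d e where "d = card D" and "e = card E"
  have D: "finite D" "E \<subseteq> D" "s \<in> D" "s \<notin> E"
    using i s assms(5) proposers_eq_empty_iff[of s n h] by (auto simp: D_def E_def unproposed_def)
  have e: "e \<ge> 1"
    using assms(6) finite_subset[OF D(2,1)] by (simp add: e_def E_def Suc_le_eq card_gt_0_iff)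
  have card_rest: "card (D - E - {s}) = d - e - 1"
    using D finite_subset[OF _ D(1)] by (simp add: d_def e_def card_Diff_subset Diff_insert[symmetric])
  have "d \<ge> e + 1" using card_mono[of D "insert s E"] D by (simp add: d_def e_def finite_subset)
  let ?f = "\<lambda>x. potential n (h(i := h i @ [x])) s"
  have "i \<notin> proposers n h s" using assms(5) by (simp add: proposers_def)
  then have "?f s = 0" using i s by (simp add: potential_def proposers_snoc)
  moreover have "(\<Sum>x\<in>D. ?f x)
      = ?f s + real (card (E - {s})) * (1 / e) + real (card (D - E - {s})) * (1 / (e + 1))"
    using i s e
    by (intro sum_piecewise_constant[OF D(1-3)])
      (auto simp: potential_def Let_def proposers_snoc unproposed_snoc E_def e_def D_def)
  ultimately have "(\<Sum>x\<in>D. ?f x)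
      = real (card (E - {s})) * (1 / e) + real (card (D - E - {s})) * (1 / (e + 1))"
    by simp
  also have "\<dots> = real e * (1 / e) + real (d - e - 1) * (1 / (e + 1))"
    using D card_rest by (simp add: e_def)
  also have "\<dots> = d / (e + 1)"
    using e \<open>d \<ge> e + 1\<close> by (simp add: field_simps)
  finally show ?thesis
    using s card_remaining_schools[OF h i] by (auto simp: D_def d_def E_def e_def potential_def Let_def)
qed

lemma sum_potential_snoc_unproposed:
  assumes h: "partial_profile n h" and i: "i < n" and s: "s \<in> unproposed n h"
  shows "(\<Sum>x\<in>{0..<n} - set (h i). potential n (h(i := h i @ [x])) s)
           = real (n - length (h i)) * potential n h s"
proof -
  define D E where "D = {0..<n} - set (h i)" and "E = unproposed n h"
  define d e where "d = card D" and "e = card E"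
  have D: "finite D" "E \<subseteq> D" "s \<in> D" "s \<in> E"
    using i s by (auto simp: D_def E_def unproposed_def)
  obtain k where k: "e = Suc k" using D by (cases e) (auto simp: e_def E_def)
  have no_proposers: "proposers n h s = {}" using s by (auto simp: proposers_def unproposed_def)
  have "d \<ge> e" using card_mono[OF D(1,2)] by (simp add: d_def e_def)
  let ?f = "\<lambda>x. potential n (h(i := h i @ [x])) s"
  have "?f s = 1 / e"
    using i D k no_proposers
    by (simp add: potential_def Let_def proposers_snoc unproposed_snoc E_def e_def)
  moreover have "(\<Sum>x\<in>D. ?f x)
      = ?f s + real (card (E - {s})) * (harm k / k) + real (card (D - E - {s})) * (harm e / e)"
    using i k no_proposers
    by (intro sum_piecewise_constant[OF D(1-3)])
      (auto simp: potential_def Let_def proposers_snoc unproposed_snoc E_def e_def D_def)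
  moreover have "card (E - {s}) = k" "card (D - E - {s}) = d - e"
    using D k finite_subset[OF D(2,1)] by (simp_all add: d_def e_def card_Diff_subset)
  moreover have "real k * (harm k / k) = harm k" by (cases "k = 0") (simp_all add: harm_def)
  ultimately have "(\<Sum>x\<in>D. ?f x) = harm e + real (d - e) * (harm e / e)"
    using k by (simp add: harm_Suc inverse_eq_divide)
  also have "\<dots> = d * (harm e / e)"
    using k \<open>d \<ge> e\<close> by (simp add: field_simps)
  finally show ?thesis
    using card_remaining_schools[OF h i] no_proposers
    by (simp add: D_def d_def E_def e_def potential_def Let_def)
qed

text \<open>The hypothesis on s says that a student who is the only proposer of s is never the one
  who reveals her next choice; this holds for the students rejected by DA.\<close>

lemma sum_potential_snoc:
  assumes h: "partial_profile n h" and i: "i < n" and s: "s < n"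
    and "card (proposers n h s) \<le> 1 \<longrightarrow> s \<notin> set (h i)" and "unproposed n h \<noteq> {}"
  shows "(\<Sum>x\<in>{0..<n} - set (h i). potential n (h(i := h i @ [x])) s)
           = real (n - length (h i)) * potential n h s"
proof -
  consider "proposers n h s = {}" | "card (proposers n h s) = 1" | "card (proposers n h s) \<ge> 2"
    using card_0_eq[OF finite_proposers, of n h s] by linarith
  then show ?thesis
  proof cases
    case 1
    then show ?thesis using sum_potential_snoc_unproposed[OF h i] proposers_eq_empty_iff[OF s] by blast
  next
    case 2
    then show ?thesis using sum_potential_snoc_single[OF h i 2 s] assms(4,5) by simp
  next
    case 3
    then have "card (proposers n (h(i := h i @ [x])) s) \<ge> 2" for x
      using card_proposers_snoc_ge[OF i, of h s x] by linarith
    then show ?thesis using 3 by (simp add: potential_eq_0)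
  qed
qed

lemma sum_completions_potential_reveal:
  assumes "partial_profile n h" "R \<subseteq> {0..<n}" "s < n"
    and "\<forall>i\<in>R. length (h i) < n \<and> (card (proposers n h s) \<le> 1 \<longrightarrow> s \<notin> set (h i))"
    and "card R \<le> card (unproposed n h)"
  shows "(\<Sum>prefs\<in>completions n h. potential n (reveal R h prefs) s)
           = card (completions n h) * potential n h s"
proof -
  have "finite R" using assms(2) finite_subset by blast
  then show ?thesis using assms
  proof (induction R arbitrary: h rule: finite_induct)
    case (insert i R)
    have i: "i < n" "length (h i) < n" using insert.prems by auto
    have unproposed: "unproposed n h \<noteq> {}" using insert.prems(5) insert.hyps by auto
    define c where "c = real (card (completions n h)) / (n - length (h i))"
    have "(\<Sum>prefs\<in>completions n h. potential n (reveal (insert i R) h prefs) s)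
        = (\<Sum>x\<in>{0..<n} - set (h i).
            \<Sum>prefs\<in>completions n (h(i := h i @ [x])). potential n (reveal (insert i R) h prefs) s)"
      using sum_completions_split[OF insert.prems(1) i] .
    also have "\<dots> = (\<Sum>x\<in>{0..<n} - set (h i). c * potential n (h(i := h i @ [x])) s)"
    proof (rule sum.cong[OF refl])
      fix x assume x: "x \<in> {0..<n} - set (h i)"
      let ?h = "h(i := h i @ [x])"
      have "(\<Sum>prefs\<in>completions n ?h. potential n (reveal (insert i R) h prefs) s)
          = (\<Sum>prefs\<in>completions n ?h. potential n (reveal R ?h prefs) s)"
        using reveal_insert[OF insert.hyps(2) i(1)] by simp
      also have "\<dots> = card (completions n ?h) * potential n ?h s"
      proof (rule insert.IH)
        show "partial_profile n ?h" using insert.prems(1) x by (auto simp: partial_profile_def)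
        show "\<forall>j\<in>R. length (?h j) < n \<and> (card (proposers n ?h s) \<le> 1 \<longrightarrow> s \<notin> set (?h j))"
          using insert.prems(4) insert.hyps(2) card_proposers_snoc_ge[OF i(1), of h s x] by auto
        show "card R \<le> card (unproposed n ?h)"
          using insert.prems(5) insert.hyps
          by (simp add: unproposed_snoc[OF i(1)] card_Diff_singleton_if; linarith)
      qed (use insert.prems in auto)
      also have "\<dots> = c * potential n ?h s"
        using card_completions_snoc[OF insert.prems(1) i(1), of x] x i by (simp add: c_def)
      finally show "(\<Sum>prefs\<in>completions n ?h. potential n (reveal (insert i R) h prefs) s)
          = c * potential n ?h s" .
    qed
    also have "\<dots> = c * (\<Sum>x\<in>{0..<n} - set (h i). potential n (h(i := h i @ [x])) s)"
      by (simp add: sum_distrib_left)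
    also have "\<dots> = c * (real (n - length (h i)) * potential n h s)"
      using sum_potential_snoc[OF insert.prems(1) i(1) insert.prems(3) _ unproposed] insert.prems(4)
      by simp
    also have "\<dots> = card (completions n h) * potential n h s" using i by (simp add: c_def)
    finally show ?case .
  qed simp
qed

lemma sum_completions_potential_preserved:
  fixes G :: "(nat \<Rightarrow> nat list) \<Rightarrow> real"
  assumes "partial_profile n h" "R \<subseteq> {0..<n}" "s < n"
    and "\<forall>i\<in>R. length (h i) < n \<and> (card (proposers n h s) \<le> 1 \<longrightarrow> s \<notin> set (h i))"
    and "card R \<le> card (unproposed n h)"
    and "\<And>prefs. prefs \<in> completions n h \<Longrightarrow>
      sum G (completions n (reveal R h prefs))
        = card (completions n (reveal R h prefs)) * potential n (reveal R h prefs) s"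
  shows "sum G (completions n h) = card (completions n h) * potential n h s"
  using sum_completions_tower[OF assms(1,2) _ assms(6)] sum_completions_potential_reveal[OF assms(1-5)]
    assms(4) by simp

section \<open>Deferred acceptance as a sequence of revelations\<close>

definition rejected :: "nat \<Rightarrow> (nat \<Rightarrow> nat list) \<Rightarrow> (nat \<Rightarrow> nat list) \<Rightarrow> nat set" where
  "rejected n pris h = {i\<in>{0..<n}. \<exists>j<n. j \<noteq> i \<and> last (h j) = last (h i)
                                        \<and> ranks_above (pris (last (h i))) j i}"

text \<open>In a DA history, h i lists the schools student i has applied to so far, the current one
  last.\<close>

definition da_history :: "nat \<Rightarrow> (nat \<Rightarrow> nat list) \<Rightarrow> bool" where
  "da_history n h \<longleftrightarrow> partial_profile n h \<and> (\<forall>i<n. h i \<noteq> []) \<and>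
     (\<forall>i<n. \<forall>x\<in>set (h i). \<exists>j<n. last (h j) = x) \<and>
     (\<forall>i<n. \<forall>x\<in>set (butlast (h i)). \<exists>j<n. j \<noteq> i \<and> x \<in> set (h j))"

definition rejections :: "(nat \<Rightarrow> nat list) \<Rightarrow> nat \<Rightarrow> nat" where
  "rejections h i = length (h i) - 1"

definition da_round ::
  "nat \<Rightarrow> (nat \<Rightarrow> nat list) \<Rightarrow> (nat \<Rightarrow> nat list) \<Rightarrow> (nat \<Rightarrow> nat list) \<Rightarrow> nat \<Rightarrow> nat list" where
  "da_round n pris prefs h = reveal (rejected n pris h) h prefs"

definition first_choices :: "nat \<Rightarrow> (nat \<Rightarrow> nat list) \<Rightarrow> nat \<Rightarrow> nat list" where
  "first_choices n prefs = reveal {0..<n} (\<lambda>_. []) prefs"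

lemma rejected_less: "i \<in> rejected n pris h \<Longrightarrow> i < n"
  by (simp add: rejected_def)

lemma da_historyD:
  assumes "da_history n h" "i < n"
  shows "h i \<noteq> []" "distinct (h i)" "set (h i) \<subseteq> {0..<n}" "last (h i) \<in> set (h i)"
    "last (h i) < n" "length (h i) \<le> n"
proof -
  show ne: "h i \<noteq> []" and d: "distinct (h i)" and sub: "set (h i) \<subseteq> {0..<n}"
    using assms by (auto simp: da_history_def partial_profile_def)
  show "last (h i) \<in> set (h i)" using ne by simp
  then show "last (h i) < n" using sub by auto
  show "length (h i) \<le> n" using card_mono[OF _ sub] d by (simp add: distinct_card)
qed

lemma da_history_held:
  "da_history n h \<Longrightarrow> i < n \<Longrightarrow> x \<in> set (h i) \<Longrightarrow> \<exists>j<n. last (h j) = x"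
  unfolding da_history_def by blast

lemma da_history_passed:
  "da_history n h \<Longrightarrow> i < n \<Longrightarrow> x \<in> set (butlast (h i)) \<Longrightarrow> \<exists>j<n. j \<noteq> i \<and> x \<in> set (h j)"
  unfolding da_history_def by blast

lemma nth_rejections_eq_last:
  assumes "prefs \<in> completions n h" "i < n" "h i \<noteq> []"
  shows "prefs i ! rejections h i = last (h i)"
proof -
  have "last (h i) = take (length (h i)) (prefs i) ! (length (h i) - 1)"
    using completionsD(1)[OF assms(1,2)] assms(3) by (simp add: last_conv_nth)
  then show ?thesis using assms(3) by (simp add: rejections_def)
qed

lemma rejected_length_less:
  assumes h: "da_history n h" and i: "i \<in> rejected n pris h"
  shows "length (h i) < n"
proof (rule ccontr)
  assume "\<not> length (h i) < n"
  have i_lt: "i < n" using rejected_less[OF i] .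
  have "card {0..<n} \<le> card (set (h i))"
    using \<open>\<not> length (h i) < n\<close> da_historyD(2)[OF h i_lt] by (simp add: distinct_card)
  then have all: "set (h i) = {0..<n}" using card_seteq[OF _ da_historyD(3)[OF h i_lt]] by simp
  have "(\<lambda>j. last (h j)) ` {0..<n} = {0..<n}"
    using da_historyD(5)[OF h] da_history_held[OF h i_lt] all by fastforce
  then have "inj_on (\<lambda>j. last (h j)) {0..<n}" by (simp add: eq_card_imp_inj_on)
  moreover obtain j where "j < n" "j \<noteq> i" "last (h j) = last (h i)"
    using i by (auto simp: rejected_def)
  ultimately show False using i_lt by (auto dest: inj_onD)
qed

lemma rejected_applied_by_other:
  assumes h: "da_history n h" and i: "i \<in> rejected n pris h" and x: "x \<in> set (h i)"
  shows "\<exists>j<n. j \<noteq> i \<and> x \<in> set (h j)"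
proof (cases "x = last (h i)")
  case True
  then show ?thesis using i da_historyD(4)[OF h] by (force simp: rejected_def)
next
  case False
  then have "x \<in> set (butlast (h i))" using x by (cases "h i" rule: rev_cases) auto
  then show ?thesis using da_history_passed[OF h rejected_less[OF i]] by blast
qed

lemma card_proposers_ge_2_if_rejected:
  assumes h: "da_history n h" and i: "i \<in> rejected n pris h" and s: "s \<in> set (h i)"
  shows "2 \<le> card (proposers n h s)"
proof -
  obtain j where "j < n" "j \<noteq> i" "s \<in> set (h j)" using rejected_applied_by_other[OF assms] by blast
  then have "card {i, j} \<le> card (proposers n h s)"
    using rejected_less[OF i] s by (intro card_mono) (auto simp: proposers_def)
  then show ?thesis using \<open>j \<noteq> i\<close> by simp
qed

lemma unproposed_eq_Diff_held:
  "da_history n h \<Longrightarrow> unproposed n h = {0..<n} - (\<lambda>j. last (h j)) ` {0..<n}"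
  using da_historyD(4) da_history_held by (fastforce simp: unproposed_def)

lemma da_round_eq:
  assumes h: "da_history n h" and prefs: "prefs \<in> completions n h"
  shows "da_round n pris prefs h i
           = (if i \<in> rejected n pris h then h i @ [prefs i ! length (h i)] else h i)"
proof (cases "i \<in> rejected n pris h")
  case True
  note i = rejected_less[OF True]
  have "length (h i) < length (prefs i)"
    using rejected_length_less[OF h True] completionsD(2)[OF prefs i] by simp
  then show ?thesis using True completionsD(1)[OF prefs i]
    by (simp add: da_round_def reveal_def take_Suc_conv_app_nth)
qed (simp add: da_round_def reveal_def)

lemma da_round_self_completion:
  "prefs \<in> completions n h \<Longrightarrow> prefs \<in> completions n (da_round n pris prefs h)"
  by (simp add: da_round_def completions_reveal_self)

lemma da_round_unrejected: "rejected n pris h = {} \<Longrightarrow> da_round n pris prefs h = h"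
  by (simp add: da_round_def)

lemma da_step_cong:
  assumes "\<And>j. j < n \<Longrightarrow> r j = r' j" "i < n"
  shows "da_step n P r i = da_step n P r' i"
  using assms by (simp add: da_step_def cong: conj_cong) blast

lemma da_step_rejections:
  assumes h: "da_history n h" and prefs: "prefs \<in> completions n h" and i: "i < n"
  shows "da_step n (prefs, pris) (rejections h) i = rejections (da_round n pris prefs h) i"
proof -
  have current: "prefs j ! rejections h j = last (h j)" if "j < n" for j
    using nth_rejections_eq_last[OF prefs that da_historyD(1)[OF h that]] .
  then have "da_step n (prefs, pris) (rejections h) i
      = (if i \<in> rejected n pris h then Suc (rejections h i) else rejections h i)"
    using i by (simp add: da_step_def rejected_def cong: conj_cong)
  moreover have "rejections (da_round n pris prefs h) i = Suc (rejections h i)"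
    if "i \<in> rejected n pris h"
    using that rejected_length_less[OF h that] completionsD(2)[OF prefs i] da_historyD(1)[OF h i]
    by (simp add: rejections_def da_round_def reveal_def)
  ultimately show ?thesis by (simp add: rejections_def da_round_def reveal_def)
qed

lemma rejections_first_choices: "rejections (first_choices n prefs) = (\<lambda>_. 0)"
  by (simp add: fun_eq_iff rejections_def first_choices_def reveal_def)

lemma da_history_first_choices:
  assumes "prefs \<in> completions n (\<lambda>_. [])"
  shows "da_history n (first_choices n prefs)"
proof -
  have "first_choices n prefs i = [prefs i ! 0]" "prefs i ! 0 < n" if "i < n" for i
  proof -
    have "0 < length (prefs i)" using completionsD(2)[OF assms that] that by simp
    then show "first_choices n prefs i = [prefs i ! 0]"
      using that by (simp add: first_choices_def reveal_def take_Suc_conv_app_nth)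
    show "prefs i ! 0 < n" using nth_mem[OF \<open>0 < length (prefs i)\<close>] completionsD(4)[OF assms that] by simp
  qed
  then show ?thesis by (auto simp: da_history_def partial_profile_def)
qed

lemma completions_first_choices:
  "prefs \<in> completions n (\<lambda>_. []) \<Longrightarrow> prefs \<in> completions n (first_choices n prefs)"
  by (simp add: first_choices_def completions_reveal_self)

section \<open>Unenvied students at termination\<close>

lemma envies_iff_applied_before:
  assumes h: "da_history n h" and prefs: "prefs \<in> completions n h"
    and final: "\<And>k. k < n \<Longrightarrow> da_final n (prefs, pris) k = rejections h k"
    and i: "i < n" and j: "j < n"
  shows "envies n (prefs, pris) i j \<longleftrightarrow> last (h j) \<in> set (butlast (h i))"
proof -
  have DA: "DA n (prefs, pris) k = prefs k ! rejections h k" "prefs k ! rejections h k = last (h k)"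
    if "k < n" for k
    using final[OF that] nth_rejections_eq_last[OF prefs that da_historyD(1)[OF h that]]
    by (simp_all add: DA_def)
  have len: "length (h i) \<le> length (prefs i)" "0 < length (h i)"
    using da_historyD(1,6)[OF h i] completionsD(2)[OF prefs i] by simp_all
  have "envies n (prefs, pris) i j
      \<longleftrightarrow> ranks_above (prefs i) (last (h j)) (prefs i ! rejections h i)"
    unfolding envies_def fst_conv DA(1)[OF i] DA(1)[OF j] DA(2)[OF j] ..
  also have "\<dots> \<longleftrightarrow> last (h j) \<in> set (take (rejections h i) (prefs i))"
    using len unfolding rejections_def by (intro ranks_above_nth_iff[OF completionsD(3)[OF prefs i]]) linarith
  also have "take (rejections h i) (prefs i) = butlast (h i)"
    using completionsD(1)[OF prefs i] len by (metis butlast_take rejections_def)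
  finally show ?thesis .
qed

lemma proposers_last:
  assumes h: "da_history n h" and inj: "inj_on (\<lambda>j. last (h j)) {0..<n}" and j: "j < n"
  shows "proposers n h (last (h j)) = insert j {i\<in>{0..<n}. last (h j) \<in> set (butlast (h i))}"
    and "j \<notin> {i\<in>{0..<n}. last (h j) \<in> set (butlast (h i))}"
proof -
  have "last (h j) \<in> set (h i) \<longleftrightarrow> i = j \<or> last (h j) \<in> set (butlast (h i))" if "i < n" for i
  proof (cases "i = j")
    case False
    then have "last (h i) \<noteq> last (h j)" using inj_onD[OF inj] that j by fastforce
    then show ?thesis using da_historyD(1)[OF h that] False by (cases "h i" rule: rev_cases) auto
  qed (use da_historyD(4)[OF h j] in simp)
  then show "proposers n h (last (h j)) = insert j {i\<in>{0..<n}. last (h j) \<in> set (butlast (h i))}"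
    using j by (auto simp: proposers_def)
  show "j \<notin> {i\<in>{0..<n}. last (h j) \<in> set (butlast (h i))}"
    using da_historyD(1,2)[OF h j] by (cases "h j" rule: rev_cases) auto
qed

lemma image_last_eq_if_inj:
  assumes h: "da_history n h" and inj: "inj_on (\<lambda>j. last (h j)) {0..<n}"
  shows "(\<lambda>j. last (h j)) ` {0..<n} = {0..<n}"
  using da_historyD(5)[OF h] card_image[OF inj] by (intro card_subset_eq) auto

lemma sum_potential_eq_card_single_proposer:
  assumes "unproposed n h = {}"
  shows "(\<Sum>s<n. potential n h s) = card {s\<in>{..<n}. card (proposers n h s) = 1}"
proof -
  have "potential n h s = (if card (proposers n h s) = 1 then 1 else 0)" if "s < n" for s
    using assms proposers_eq_empty_iff[OF that] by (simp add: potential_def)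
  then have "(\<Sum>s<n. potential n h s) = (\<Sum>s<n. if card (proposers n h s) = 1 then 1 else 0)"
    by simp
  also have "\<dots> = card {s\<in>{..<n}. card (proposers n h s) = 1}"
    by (simp add: sum.inter_filter[symmetric])
  finally show ?thesis .
qed

lemma not_envied_eq_single_proposer:
  assumes h: "da_history n h" and prefs: "prefs \<in> completions n h"
    and final: "\<And>k. k < n \<Longrightarrow> da_final n (prefs, pris) k = rejections h k"
    and inj: "inj_on (\<lambda>j. last (h j)) {0..<n}"
  shows "not_envied n (prefs, pris) = {j\<in>{0..<n}. proposers n h (last (h j)) = {j}}"
proof -
  have "j \<in> not_envied n (prefs, pris) \<longleftrightarrow> proposers n h (last (h j)) = {j}" if "j < n" for j
  proof -
    define S where "S = {i\<in>{0..<n}. last (h j) \<in> set (butlast (h i))}"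
    have "j \<in> not_envied n (prefs, pris) \<longleftrightarrow> S = {}"
      using envies_iff_applied_before[OF h prefs final _ that] that
      by (auto simp: not_envied_def S_def)
    moreover have "proposers n h (last (h j)) = insert j S" "j \<notin> S"
      using proposers_last[OF h inj that] by (simp_all add: S_def)
    ultimately show ?thesis by auto
  qed
  then show ?thesis by (auto simp: not_envied_def)
qed

lemma card_not_envied_eq_sum_potential:
  assumes h: "da_history n h" and prefs: "prefs \<in> completions n h"
    and final: "\<And>k. k < n \<Longrightarrow> da_final n (prefs, pris) k = rejections h k"
    and inj: "inj_on (\<lambda>j. last (h j)) {0..<n}"
  shows "card (not_envied n (prefs, pris)) = (\<Sum>s<n. potential n h s)"
proof -
  note NE = not_envied_eq_single_proposer[OF assms]
  have single: "proposers n h (last (h j)) = {j} \<longleftrightarrow> card (proposers n h (last (h j))) = 1"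
    if "j < n" for j
    using proposers_last[OF h inj that] by (auto simp: card_Suc_eq)
  have "(\<lambda>j. last (h j)) ` not_envied n (prefs, pris) = {s\<in>{..<n}. card (proposers n h s) = 1}"
  proof (intro equalityI subsetI)
    fix s assume "s \<in> (\<lambda>j. last (h j)) ` not_envied n (prefs, pris)"
    then obtain j where "j < n" "proposers n h (last (h j)) = {j}" "s = last (h j)"
      by (auto simp: NE)
    then show "s \<in> {s\<in>{..<n}. card (proposers n h s) = 1}" using da_historyD(5)[OF h] by simp
  next
    fix s assume s: "s \<in> {s\<in>{..<n}. card (proposers n h s) = 1}"
    then have "s \<in> (\<lambda>j. last (h j)) ` {0..<n}" using image_last_eq_if_inj[OF h inj] by simp
    then obtain j where j: "j < n" "s = last (h j)" by auto
    then have "proposers n h (last (h j)) = {j}" using single s by simp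
    then have "j \<in> not_envied n (prefs, pris)" using j by (simp add: NE)
    then show "s \<in> (\<lambda>j. last (h j)) ` not_envied n (prefs, pris)" using j by blast
  qed
  moreover have "inj_on (\<lambda>j. last (h j)) (not_envied n (prefs, pris))"
    using inj by (rule inj_on_subset) (auto simp: NE)
  moreover have "unproposed n h = {}"
    using image_last_eq_if_inj[OF h inj] by (simp add: unproposed_eq_Diff_held[OF h])
  ultimately show ?thesis
    using sum_potential_eq_card_single_proposer card_image by fastforce
qed

section \<open>Running DA under fixed priorities\<close>

context
  fixes n :: nat and pris :: "nat \<Rightarrow> nat list"
  assumes priorities: "\<forall>s<n. pris s \<in> permutations_of_set {0..<n}"
begin

lemma exists_unrejected_holder:
  assumes h: "da_history n h" and j: "j < n"
  shows "\<exists>j0<n. j0 \<notin> rejected n pris h \<and> last (h j0) = last (h j)"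
proof -
  define x where "x = last (h j)"
  define J where "J = {j'. j' < n \<and> last (h j') = x}"
  have "pris x \<in> permutations_of_set {0..<n}"
    using priorities da_historyD(5)[OF h j] by (simp add: x_def)
  then have px: "distinct (pris x)" "set (pris x) = {0..<n}" by (simp_all add: permutations_of_setD)
  moreover have "J \<subseteq> set (pris x)" unfolding J_def px(2) by auto
  moreover have "j \<in> J" using j by (simp add: J_def x_def)
  then have "J \<noteq> {}" by blast
  ultimately obtain j0 where j0: "j0 \<in> J" "\<forall>j'\<in>J. \<not> ranks_above (pris x) j' j0"
    using ranks_above_exists_top[of "pris x" J] by blast
  have "j0 \<notin> rejected n pris h"
  proof
    assume "j0 \<in> rejected n pris h"
    then obtain j' where "j' < n" "last (h j') = last (h j0)" "ranks_above (pris (last (h j0))) j' j0"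
      unfolding rejected_def by blast
    then show False using j0 by (simp add: J_def)
  qed
  then show ?thesis using j0(1) by (auto simp: J_def x_def)
qed

lemma da_history_da_round:
  assumes h: "da_history n h" and prefs: "prefs \<in> completions n h"
  shows "da_history n (da_round n pris prefs h)"
proof -
  let ?R = "rejected n pris h" and ?q = "da_round n pris prefs h"
  note q = da_round_eq[OF h prefs]
  have mono: "set (h j) \<subseteq> set (?q j)" for j by (auto simp: q)
  have "distinct (?q i) \<and> set (?q i) \<subseteq> {0..<n}" if i: "i < n" for i
  proof (cases "i \<in> ?R")
    case True
    then have "?q i = take (Suc (length (h i))) (prefs i)" by (simp add: da_round_def reveal_def)
    then show ?thesis using completionsD(3,4)[OF prefs i] by (auto dest: in_set_takeD)
  qed (use da_historyD(2,3)[OF h i] q in simp)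
  moreover have "?q i \<noteq> []" if "i < n" for i using mono[of i] da_historyD(1)[OF h that] by auto
  moreover have "\<exists>j<n. last (?q j) = x" if i: "i < n" and x: "x \<in> set (?q i)" for i x
  proof (cases "x \<in> set (h i)")
    case True
    then obtain j where "j < n" "last (h j) = x" using da_history_held[OF h i] by blast
    then show ?thesis using exists_unrejected_holder[OF h] q by metis
  next
    case False
    then have "x = last (?q i)" using x by (simp add: q split: if_splits)
    then show ?thesis using i by blast
  qed
  moreover have "\<exists>j<n. j \<noteq> i \<and> x \<in> set (?q j)"
    if i: "i < n" and x: "x \<in> set (butlast (?q i))" for i x
  proof (cases "i \<in> ?R")
    case True
    then show ?thesis using x q rejected_applied_by_other[OF h True] mono by fastforce
  next
    case False
    then show ?thesis using x q da_history_passed[OF h i] mono by fastforce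
  qed
  ultimately show ?thesis by (simp add: da_history_def partial_profile_def)
qed

lemma card_rejected_le_unproposed:
  assumes h: "da_history n h"
  shows "card (rejected n pris h) \<le> card (unproposed n h)"
proof -
  let ?held = "(\<lambda>j. last (h j)) ` {0..<n}"
  have "?held \<subseteq> (\<lambda>j. last (h j)) ` ({0..<n} - rejected n pris h)"
  proof
    fix x assume "x \<in> ?held"
    then obtain j where "j < n" "x = last (h j)" by auto
    then obtain j0 where "j0 < n" "j0 \<notin> rejected n pris h" "x = last (h j0)"
      using exists_unrejected_holder[OF h] by metis
    then show "x \<in> (\<lambda>j. last (h j)) ` ({0..<n} - rejected n pris h)" by simp
  qed
  then have "card ?held \<le> card ((\<lambda>j. last (h j)) ` ({0..<n} - rejected n pris h))"
    by (intro card_mono) auto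
  also have "\<dots> \<le> card ({0..<n} - rejected n pris h)" by (rule card_image_le) auto
  finally have "card ?held \<le> card ({0..<n} - rejected n pris h)" .
  moreover have "rejected n pris h \<subseteq> {0..<n}" "?held \<subseteq> {0..<n}"
    using rejected_less da_historyD(5)[OF h] by auto
  ultimately show ?thesis
    unfolding unproposed_eq_Diff_held[OF h] using card_mono[of "{0..<n}" "rejected n pris h"]
    by (simp add: card_Diff_subset finite_subset)
qed

lemma da_run_invariant:
  assumes "da_history n h" "prefs \<in> completions n h"
  shows "da_history n ((da_round n pris prefs ^^ m) h)
           \<and> prefs \<in> completions n ((da_round n pris prefs ^^ m) h)"
proof (induction m)
  case (Suc m)
  then show ?case
    using da_history_da_round da_round_self_completion by simp
qed (use assms in simp)

lemma funpow_da_step_rejections: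
  assumes "da_history n h" "prefs \<in> completions n h" "i < n"
  shows "(da_step n (prefs, pris) ^^ m) (rejections h) i
           = rejections ((da_round n pris prefs ^^ m) h) i"
  using assms(3)
proof (induction m arbitrary: i)
  case (Suc m)
  then have "da_step n (prefs, pris) ((da_step n (prefs, pris) ^^ m) (rejections h)) i
      = da_step n (prefs, pris) (rejections ((da_round n pris prefs ^^ m) h)) i"
    by (intro da_step_cong) simp_all
  then show ?case
    using da_step_rejections[OF da_run_invariant[OF assms(1,2), THEN conjunct1]
        da_run_invariant[OF assms(1,2), THEN conjunct2] Suc.prems] by simp
qed simp

lemma da_run_stalls_or_grows:
  assumes h: "da_history n h" and prefs: "prefs \<in> completions n h"
  shows "rejected n pris ((da_round n pris prefs ^^ m) h) = {}
           \<or> (\<Sum>i<n. length (h i)) + m \<le> (\<Sum>i<n. length ((da_round n pris prefs ^^ m) h i))"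
proof (induction m)
  case (Suc m)
  let ?q = "(da_round n pris prefs ^^ m) h"
  note inv = da_run_invariant[OF h prefs, of m]
  show ?case
  proof (cases "rejected n pris ?q = {}")
    case True
    then show ?thesis by (simp add: da_round_unrejected)
  next
    case False
    then obtain i where i: "i \<in> rejected n pris ?q" by blast
    have "(\<Sum>i<n. length (?q i)) < (\<Sum>i<n. length (da_round n pris prefs ?q i))"
      using i rejected_less[OF i] by (intro sum_strict_mono_ex1) (auto simp: da_round_eq inv)
    then show ?thesis using Suc False by simp
  qed
qed simp

lemma da_run_terminates:
  assumes h: "da_history n h" and prefs: "prefs \<in> completions n h"
  shows "rejected n pris ((da_round n pris prefs ^^ (n * n)) h) = {}"
proof (rule ccontr)
  let ?q = "(da_round n pris prefs ^^ (n * n)) h"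
  assume "rejected n pris ?q \<noteq> {}"
  then have "n > 0" using rejected_less by fastforce
  then have "0 < (\<Sum>i<n. length (h i))" using da_historyD(1)[OF h] by (simp add: sum_pos2)
  also have "\<dots> + n * n \<le> (\<Sum>i<n. length (?q i))"
    using da_run_stalls_or_grows[OF h prefs] \<open>rejected n pris ?q \<noteq> {}\<close> by blast
  also have "\<dots> \<le> (\<Sum>i<n. n)"
    using da_historyD(6) da_run_invariant[OF h prefs] by (intro sum_mono) blast
  finally show False by simp
qed

lemma sum_completions_potential_da_run:
  assumes "da_history n h" "s < n"
  shows "(\<Sum>prefs\<in>completions n h. potential n ((da_round n pris prefs ^^ m) h) s)
           = card (completions n h) * potential n h s"
  using assms(1)
proof (induction m arbitrary: h)
  case (Suc m)
  let ?R = "rejected n pris h"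
  have R: "\<forall>i\<in>?R. i < n \<and> length (h i) < n"
    using rejected_less rejected_length_less[OF Suc.prems] by blast
  show ?case
  proof (rule sum_completions_potential_preserved)
    show "partial_profile n h" using Suc.prems by (simp add: da_history_def)
    show "?R \<subseteq> {0..<n}" "s < n" using R assms(2) by auto
    show "\<forall>i\<in>?R. length (h i) < n \<and> (card (proposers n h s) \<le> 1 \<longrightarrow> s \<notin> set (h i))"
      using R card_proposers_ge_2_if_rejected[OF Suc.prems] by fastforce
    show "card ?R \<le> card (unproposed n h)" by (rule card_rejected_le_unproposed[OF Suc.prems])
  next
    fix prefs assume prefs: "prefs \<in> completions n h"
    let ?h = "reveal ?R h prefs"
    have "(da_round n pris y ^^ Suc m) h = (da_round n pris y ^^ m) ?h"
      if "y \<in> completions n ?h" for y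
    proof -
      have "da_round n pris y h = ?h"
        using reveal_eq_if_completions_reveal[OF R prefs that] by (simp add: da_round_def)
      then show ?thesis by (simp only: funpow_Suc_right comp_apply)
    qed
    then have "(\<Sum>y\<in>completions n ?h. potential n ((da_round n pris y ^^ Suc m) h) s)
        = (\<Sum>y\<in>completions n ?h. potential n ((da_round n pris y ^^ m) ?h) s)"
      by simp
    also have "\<dots> = card (completions n ?h) * potential n ?h s"
      using Suc.IH da_history_da_round[OF Suc.prems prefs, unfolded da_round_def] by blast
    finally show "(\<Sum>y\<in>completions n ?h. potential n ((da_round n pris y ^^ Suc m) h) s)
        = card (completions n ?h) * potential n ?h s" .
  qed
qed simp

lemma inj_on_last_if_unrejected:
  assumes h: "da_history n h" and unrejected: "rejected n pris h = {}"
  shows "inj_on (\<lambda>j. last (h j)) {0..<n}"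
proof (rule inj_onI, rule ccontr)
  fix i j assume ij: "i \<in> {0..<n}" "j \<in> {0..<n}" "last (h i) = last (h j)" "i \<noteq> j"
  have "set (pris (last (h i))) = {0..<n}"
    using priorities da_historyD(5)[OF h] ij(1) by (simp add: permutations_of_setD)
  then have "ranks_above (pris (last (h i))) i j \<or> ranks_above (pris (last (h i))) j i"
    using ij by (intro ranks_above_total) auto
  then have "j \<in> rejected n pris h \<or> i \<in> rejected n pris h"
    using ij by (auto simp: rejected_def)
  then show False using unrejected by blast
qed

lemma card_not_envied_eq_sum_final_potential:
  assumes prefs: "prefs \<in> completions n (\<lambda>_. [])"
  defines "final \<equiv> (da_round n pris prefs ^^ (n * n)) (first_choices n prefs)"
  shows "card (not_envied n (prefs, pris)) = (\<Sum>s<n. potential n final s)"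
proof (rule card_not_envied_eq_sum_potential)
  note start = da_history_first_choices[OF prefs] completions_first_choices[OF prefs]
  show "da_history n final" "prefs \<in> completions n final"
    using da_run_invariant[OF start] by (simp_all add: final_def)
  show "da_final n (prefs, pris) k = rejections final k" if "k < n" for k
    using funpow_da_step_rejections[OF start that, of "n * n"]
    by (simp add: da_final_def final_def rejections_first_choices)
  show "inj_on (\<lambda>j. last (final j)) {0..<n}"
    using inj_on_last_if_unrejected da_run_terminates[OF start] da_run_invariant[OF start]
    by (simp add: final_def)
qed

lemma sum_card_not_envied:
  "(\<Sum>prefs\<in>completions n (\<lambda>_. []). real (card (not_envied n (prefs, pris))))
     = card (completions n (\<lambda>_. [])) * harm n"
proof -
  let ?C = "completions n (\<lambda>_. [])"
  define final where "final prefs = (da_round n pris prefs ^^ (n * n)) (first_choices n prefs)"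
    for prefs
  have "(\<Sum>prefs\<in>?C. real (card (not_envied n (prefs, pris))))
      = (\<Sum>s<n. \<Sum>prefs\<in>?C. potential n (final prefs) s)"
    using card_not_envied_eq_sum_final_potential
    by (simp add: final_def sum.swap[of _ _ "{..<n}"])
  also have "\<dots> = (\<Sum>s<n. card ?C * potential n (\<lambda>_. []) s)"
  proof (rule sum.cong[OF refl], rule sum_completions_potential_preserved)
    fix s assume "s \<in> {..<n}"
    then show "s < n" by simp
    show "card {0..<n} \<le> card (unproposed n (\<lambda>_. []))" by (simp add: unproposed_def)
    fix prefs assume prefs: "prefs \<in> ?C"
    let ?h = "reveal {0..<n} (\<lambda>_. []) prefs"
    have "first_choices n y = ?h" if "y \<in> completions n ?h" for y
      using reveal_eq_if_completions_reveal[OF _ prefs that] by (auto simp: first_choices_def)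
    then show "(\<Sum>y\<in>completions n ?h. potential n (final y) s)
        = card (completions n ?h) * potential n ?h s"
      using sum_completions_potential_da_run[OF da_history_first_choices[OF prefs] \<open>s < n\<close>]
      by (simp add: final_def first_choices_def)
  qed (auto simp: partial_profile_def)
  also have "\<dots> = card ?C * harm n"
    by (simp add: potential_def unproposed_def proposers_def harm_def)
  finally show ?thesis .
qed

end

theorem proposition3:
  fixes n :: nat
  shows "measure_pmf.expectation (pmf_of_set (profiles n)) (\<lambda>P. real (card (not_envied n P)))
         = (\<Sum>k=1..n. 1 / real k)"
proof -
  let ?C = "completions n (\<lambda>_. [])"
  have profiles: "profiles n = ?C \<times> ?C" by (simp add: profiles_def completions_Nil)
  have "?C \<noteq> {}" by (simp add: completions_Nil PiE_eq_empty_iff)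
  then have "profiles n \<noteq> {}" "finite (profiles n)" by (simp_all add: profiles finite_completions)
  then have "measure_pmf.expectation (pmf_of_set (profiles n)) (\<lambda>P. real (card (not_envied n P)))
      = (\<Sum>prefs\<in>?C. \<Sum>pris\<in>?C. real (card (not_envied n (prefs, pris)))) / card (profiles n)"
    by (simp add: integral_pmf_of_set profiles sum.cartesian_product)
  also have "\<dots> = (\<Sum>pris\<in>?C. \<Sum>prefs\<in>?C. real (card (not_envied n (prefs, pris)))) / card (profiles n)"
    by (subst sum.swap) (rule refl)
  also have "\<dots> = (\<Sum>pris\<in>?C. card ?C * harm n) / (card ?C * card ?C)"
  proof -
    have "(\<Sum>prefs\<in>?C. real (card (not_envied n (prefs, pris)))) = card ?C * harm n"
      if "pris \<in> ?C" for pris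
      using that by (intro sum_card_not_envied) (simp add: mem_completions_iff)
    then have "(\<Sum>pris\<in>?C. \<Sum>prefs\<in>?C. real (card (not_envied n (prefs, pris))))
        = (\<Sum>pris\<in>?C. card ?C * harm n)"
      by (rule sum.cong[OF refl])
    moreover have "card (profiles n) = card ?C * card ?C"
      by (simp only: profiles card_cartesian_product)
    ultimately show ?thesis by (simp only: of_nat_mult)
  qed
  also have "\<dots> = harm n"
    using \<open>?C \<noteq> {}\<close> finite_completions by simp
  finally show ?thesis by (simp add: harm_def inverse_eq_divide)
qed

end
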